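(* Let $B$ and $B'$ be distinct bases of a sparse paving matroid $M$. For any $a\in B-B'$ and any $X\subseteq B'-B$, there are at least $|X|-2$ elements $x\in X$ for which both $(B-a)\cup \{x\}$ and $(B'-x)\cup \{a\}$ are bases of $M$.
   Context: A matroid $M$ of rank $r$ is sparse paving if every nonspanning circuit of $M$ is a hyperplane; equivalently, every $r$-element subset of $E(M)$ is either a basis or a circuit-hyperplane (a set that is both a circuit and a hyperplane). *)

theory Defs
  imports Main
begin

definition matroid :: "'a set \<Rightarrow> ('a set \<Rightarrow> bool) \<Rightarrow> bool" where
  "matroid E indep \<longleftrightarrow>
     finite E \<and>
     (\<forall>X. indep X \<longrightarrow> X \<subseteq> E) \<and>
     indep {} \<and>
     (\<forall>X Y. indep X \<and> Y \<subseteq> X \<longrightarrow> indep Y) \<and>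
     (\<forall>X Y. indep X \<and> indep Y \<and> card X < card Y \<longrightarrow>
        (\<exists>y\<in>Y - X. indep (insert y X)))"

definition basis :: "'a set \<Rightarrow> ('a set \<Rightarrow> bool) \<Rightarrow> 'a set \<Rightarrow> bool" where
  "basis E indep B \<longleftrightarrow> indep B \<and> (\<forall>x\<in>E - B. \<not> indep (insert x B))"

definition rk :: "('a set \<Rightarrow> bool) \<Rightarrow> 'a set \<Rightarrow> nat" where
  "rk indep X = Max {card Y | Y. Y \<subseteq> X \<and> indep Y}"

definition circuit :: "'a set \<Rightarrow> ('a set \<Rightarrow> bool) \<Rightarrow> 'a set \<Rightarrow> bool" where
  "circuit E indep C \<longleftrightarrow> C \<subseteq> E \<and> \<not> indep C \<and> (\<forall>D. D \<subset> C \<longrightarrow> indep D)"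

definition closure :: "'a set \<Rightarrow> ('a set \<Rightarrow> bool) \<Rightarrow> 'a set \<Rightarrow> 'a set" where
  "closure E indep X = {x\<in>E. rk indep (insert x X) = rk indep X}"

definition spanning :: "'a set \<Rightarrow> ('a set \<Rightarrow> bool) \<Rightarrow> 'a set \<Rightarrow> bool" where
  "spanning E indep X \<longleftrightarrow> X \<subseteq> E \<and> rk indep X = rk indep E"

definition flat :: "'a set \<Rightarrow> ('a set \<Rightarrow> bool) \<Rightarrow> 'a set \<Rightarrow> bool" where
  "flat E indep F \<longleftrightarrow> F \<subseteq> E \<and> closure E indep F = F"

definition hyperplane :: "'a set \<Rightarrow> ('a set \<Rightarrow> bool) \<Rightarrow> 'a set \<Rightarrow> bool" where
  "hyperplane E indep H \<longleftrightarrow> flat E indep H \<and> rk indep H + 1 = rk indep E"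

definition sparse_paving :: "'a set \<Rightarrow> ('a set \<Rightarrow> bool) \<Rightarrow> bool" where
  "sparse_paving E indep \<longleftrightarrow> matroid E indep \<and>
     (\<forall>C. circuit E indep C \<and> \<not> spanning E indep C \<longrightarrow> hyperplane E indep C)"

end

theory Submission
  imports Defs
begin

text \<open>In a sparse paving matroid of rank r, a dependent set of size at most r is a
circuit-hyperplane; in particular it has size exactly r and is closed. Hence two distinct
elements u, v cannot both make a set S of size r - 1 dependent: otherwise S + v would lie in the
closure of the hyperplane S + u without lying in it. Applying this once to S = B - a and once to
the sets (B' + a) - x - y bounds each of the two kinds of failure by one element of X.\<close>

lemma matroid_augment:
  "matroid E indep \<Longrightarrow> indep X \<Longrightarrow> indep Y \<Longrightarrow> card X < card Y \<Longrightarrow>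
     \<exists>y\<in>Y - X. indep (insert y X)"
  unfolding matroid_def by blast

lemma matroid_indep_subset_ground: "matroid E indep \<Longrightarrow> indep X \<Longrightarrow> X \<subseteq> E"
  unfolding matroid_def by blast

lemma matroid_indep_empty: "matroid E indep \<Longrightarrow> indep {}"
  unfolding matroid_def by blast

lemma matroid_finite_subset: "matroid E indep \<Longrightarrow> X \<subseteq> E \<Longrightarrow> finite X"
  unfolding matroid_def by (meson finite_subset)

lemma finite_indep_cards: "finite X \<Longrightarrow> finite {card Y | Y. Y \<subseteq> X \<and> indep Y}"
  by (rule finite_subset[of _ "card ` Pow X"]) auto

lemma card_le_rk:
  assumes "finite X" "Y \<subseteq> X" "indep Y"
  shows "card Y \<le> rk indep X"
  unfolding rk_def using assms by (intro Max_ge[OF finite_indep_cards]) auto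

lemma rk_le:
  assumes "finite X" "indep {}" "\<And>Y. Y \<subseteq> X \<Longrightarrow> indep Y \<Longrightarrow> card Y \<le> k"
  shows "rk indep X \<le> k"
proof -
  have "{card Y | Y. Y \<subseteq> X \<and> indep Y} \<noteq> {}" using assms(2) by auto
  then show ?thesis
    unfolding rk_def using assms by (subst Max_le_iff[OF finite_indep_cards]) auto
qed

lemma indep_card_le_basis:
  assumes M: "matroid E indep" and B: "basis E indep B" and I: "indep I"
  shows "card I \<le> card B"
proof (rule ccontr)
  assume "\<not> card I \<le> card B"
  moreover have "indep B" using B by (simp add: basis_def)
  ultimately obtain y where y: "y \<in> I - B" "indep (insert y B)"
    using matroid_augment[OF M \<open>indep B\<close> I] by auto
  moreover have "y \<in> E" using matroid_indep_subset_ground[OF M I] y(1) by blast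
  ultimately show False using B unfolding basis_def by blast
qed

lemma rk_ground_eq_card_basis:
  assumes M: "matroid E indep" and B: "basis E indep B"
  shows "rk indep E = card B"
proof (rule antisym)
  have fE: "finite E" using M by (simp add: matroid_def)
  show "rk indep E \<le> card B"
    using rk_le[where indep=indep, OF fE matroid_indep_empty[OF M]] indep_card_le_basis[OF M B]
    by blast
  have "indep B" using B by (simp add: basis_def)
  then show "card B \<le> rk indep E"
    using card_le_rk[OF fE] matroid_indep_subset_ground[OF M] by blast
qed

lemma bases_card_eq:
  assumes M: "matroid E indep" and "basis E indep B" "basis E indep B'"
  shows "card B' = card B"
  using indep_card_le_basis[OF M] assms(2,3) by (simp add: basis_def antisym)

lemma basis_iff_indep_card_eq:
  assumes M: "matroid E indep" and B: "basis E indep B" and c: "card I = card B"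
  shows "basis E indep I \<longleftrightarrow> indep I"
proof
  assume I: "indep I"
  show "basis E indep I"
    unfolding basis_def
  proof (intro conjI ballI I notI)
    fix z assume z: "z \<in> E - I" and ind: "indep (insert z I)"
    have "finite I" using matroid_finite_subset[OF M matroid_indep_subset_ground[OF M I]] .
    then have "card (insert z I) = card B + 1" using z c by simp
    with indep_card_le_basis[OF M B ind] show False by simp
  qed
qed (simp add: basis_def)

lemma dependent_contains_circuit:
  assumes M: "matroid E indep" and D: "D \<subseteq> E" "\<not> indep D"
  shows "\<exists>C\<subseteq>D. circuit E indep C"
proof -
  obtain C where C: "C \<subseteq> D" "\<not> indep C"
    and least: "\<And>C'. C' \<subseteq> D \<and> \<not> indep C' \<Longrightarrow> card C \<le> card C'"
    using ex_has_least_nat[of "\<lambda>C. C \<subseteq> D \<and> \<not> indep C" D card] D by blast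
  have "finite C" using C(1) D(1) matroid_finite_subset[OF M] by blast
  have "indep C'" if "C' \<subset> C" for C'
    using least[of C'] psubset_card_mono[OF \<open>finite C\<close> that] that C(1) by fastforce
  then show ?thesis using C D(1) unfolding circuit_def by blast
qed

lemma rk_circuit:
  assumes M: "matroid E indep" and C: "circuit E indep C"
  shows "rk indep C + 1 = card C"
proof -
  have fC: "finite C" using C matroid_finite_subset[OF M] by (simp add: circuit_def)
  have dep: "\<not> indep C" and sub: "\<And>D. D \<subset> C \<Longrightarrow> indep D"
    using C unfolding circuit_def by blast+
  obtain c where c: "c \<in> C" using dep matroid_indep_empty[OF M] by (cases "C = {}") auto
  have upper: "rk indep C \<le> card C - 1"
  proof (rule rk_le[where indep=indep, OF fC matroid_indep_empty[OF M]])
    fix Y assume "Y \<subseteq> C" "indep Y"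
    then have "Y \<subset> C" using dep by blast
    then have "card Y < card C" by (rule psubset_card_mono[OF fC])
    then show "card Y \<le> card C - 1" by simp
  qed
  have "indep (C - {c})" using c by (intro sub) blast
  then have "card (C - {c}) \<le> rk indep C" by (rule card_le_rk[OF fC Diff_subset])
  moreover have "card (C - {c}) = card C - 1" "card C > 0" using c fC card_gt_0_iff by auto
  ultimately show ?thesis using upper by linarith
qed

lemma sparse_paving_small_dependent_hyperplane:
  assumes SP: "sparse_paving E indep" and B: "basis E indep B"
    and D: "D \<subseteq> E" "card D \<le> card B" "\<not> indep D"
  shows "card D = card B \<and> hyperplane E indep D"
proof -
  have M: "matroid E indep" using SP by (simp add: sparse_paving_def)
  obtain C where CD: "C \<subseteq> D" and C: "circuit E indep C"
    using dependent_contains_circuit[OF M D(1,3)] by blast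
  have fD: "finite D" using matroid_finite_subset[OF M D(1)] .
  have rkC: "rk indep C + 1 = card C" using rk_circuit[OF M C] .
  moreover have "card C \<le> card B" using card_mono[OF fD CD] D(2) by simp
  ultimately have "\<not> spanning E indep C"
    using rk_ground_eq_card_basis[OF M B] by (simp add: spanning_def)
  then have hyp: "hyperplane E indep C" using SP C by (simp add: sparse_paving_def)
  then have "card C = card B"
    using rkC rk_ground_eq_card_basis[OF M B] by (simp add: hyperplane_def)
  then have "C = D" using card_seteq[OF fD CD] D(2) by simp
  then show ?thesis using hyp \<open>card C = card B\<close> by simp
qed

lemma sparse_paving_unique_dependent_extension:
  assumes SP: "sparse_paving E indep" and B: "basis E indep B"
    and S: "S \<subseteq> E" "card S + 1 = card B"
    and uv: "u \<in> E" "v \<in> E" "u \<notin> S" "v \<notin> S"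
    and dep_u: "\<not> indep (insert u S)" and dep_v: "\<not> indep (insert v S)"
  shows "u = v"
proof (rule ccontr)
  assume "u \<noteq> v"
  have M: "matroid E indep" using SP by (simp add: sparse_paving_def)
  have fS: "finite S" using matroid_finite_subset[OF M S(1)] .
  have iS: "indep S"
    using sparse_paving_small_dependent_hyperplane[OF SP B S(1)] S(2) by fastforce
  let ?D = "insert u S"
  have "card ?D = card B" using S(2) uv(3) fS by simp
  then have "hyperplane E indep ?D"
    using sparse_paving_small_dependent_hyperplane[OF SP B _ _ dep_u] S(1) uv(1) by simp
  then have flat: "closure E indep ?D = ?D" and rkD: "rk indep ?D + 1 = card B"
    using rk_ground_eq_card_basis[OF M B] by (auto simp: hyperplane_def flat_def)
  have "rk indep (insert v ?D) \<le> card S"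
  proof (rule rk_le[where indep=indep, OF _ matroid_indep_empty[OF M]])
    show "finite (insert v ?D)" using fS by simp
    fix Y assume Y: "Y \<subseteq> insert v ?D" "indep Y"
    show "card Y \<le> card S"
    proof (rule ccontr)
      assume "\<not> card Y \<le> card S"
      then obtain w where "w \<in> Y - S" "indep (insert w S)"
        using matroid_augment[OF M iS Y(2)] by auto
      then show False using Y(1) dep_u dep_v by auto
    qed
  qed
  moreover have "rk indep ?D \<le> rk indep (insert v ?D)"
    using fS by (intro rk_le matroid_indep_empty[OF M] card_le_rk) auto
  ultimately have "v \<in> closure E indep ?D"
    using rkD S(2) uv(2) by (simp add: closure_def)
  then show False using flat uv(4) \<open>u \<noteq> v\<close> by simp
qed

lemma sparse_paving_card_dependent_insert_le_1:
  assumes SP: "sparse_paving E indep" and B: "basis E indep B"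
    and S: "S \<subseteq> E" "card S + 1 = card B" and Y: "Y \<subseteq> E - S"
  shows "card {x \<in> Y. \<not> indep (insert x S)} \<le> 1"
proof -
  have M: "matroid E indep" using SP by (simp add: sparse_paving_def)
  have "finite Y" using Y matroid_finite_subset[OF M] by blast
  moreover have "x = y" if "x \<in> Y" "y \<in> Y"
      "\<not> indep (insert x S)" "\<not> indep (insert y S)" for x y
    using sparse_paving_unique_dependent_extension[OF SP B S] that Y by blast
  ultimately show ?thesis by (simp add: card_le_Suc0_iff_eq)
qed

lemma sparse_paving_card_dependent_remove_le_1:
  assumes SP: "sparse_paving E indep" and B: "basis E indep B"
    and T: "T \<subseteq> E" "card T = card B + 1" and Y: "Y \<subseteq> T"
  shows "card {x \<in> Y. \<not> indep (T - {x})} \<le> 1"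
proof -
  have M: "matroid E indep" using SP by (simp add: sparse_paving_def)
  have fT: "finite T" using matroid_finite_subset[OF M T(1)] .
  have "x = y" if xy: "x \<in> Y" "y \<in> Y" "\<not> indep (T - {x})" "\<not> indep (T - {y})" for x y
  proof (rule ccontr)
    assume "x \<noteq> y"
    let ?S = "T - {x, y}"
    have "{x, y} \<subseteq> T" using xy(1,2) Y by blast
    moreover have "card {x, y} = 2" using \<open>x \<noteq> y\<close> by simp
    ultimately have "card ?S + 1 = card B"
      using card_Diff_subset[of "{x, y}" T] card_mono[OF fT, of "{x, y}"] T(2) by simp
    moreover have "?S \<subseteq> E" "y \<in> E" "x \<in> E" "y \<notin> ?S" "x \<notin> ?S"
      using \<open>{x, y} \<subseteq> T\<close> T(1) by auto
    moreover have "insert y ?S = T - {x}" "insert x ?S = T - {y}"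
      using \<open>{x, y} \<subseteq> T\<close> \<open>x \<noteq> y\<close> by auto
    then have "\<not> indep (insert y ?S)" "\<not> indep (insert x ?S)"
      using xy(3,4) by simp_all
    ultimately have "y = x" by (meson sparse_paving_unique_dependent_extension[OF SP B])
    then show False using \<open>x \<noteq> y\<close> by simp
  qed
  then show ?thesis using finite_subset[OF Y fT] by (simp add: card_le_Suc0_iff_eq)
qed

lemma card_filter_conj_ge:
  assumes "finite A" "card {x \<in> A. \<not> P x} \<le> 1" "card {x \<in> A. \<not> Q x} \<le> 1"
  shows "card A - 2 \<le> card {x \<in> A. P x \<and> Q x}"
proof -
  have "card A = card ({x \<in> A. P x \<and> Q x} \<union> {x \<in> A. \<not> P x} \<union> {x \<in> A. \<not> Q x})"
    by (rule arg_cong[of _ _ card]) auto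
  also have "\<dots> \<le> card {x \<in> A. P x \<and> Q x} + card {x \<in> A. \<not> P x} + card {x \<in> A. \<not> Q x}"
    by (meson card_Un_le add_right_mono order_trans)
  finally show ?thesis using assms(2,3) by linarith
qed

theorem lemma2p2:
  fixes E :: "'a set" and indep :: "'a set \<Rightarrow> bool" and B B' X :: "'a set" and a :: 'a
  assumes "matroid E indep"
    and "sparse_paving E indep"
    and "basis E indep B" and "basis E indep B'" and "B \<noteq> B'"
    and "a \<in> B - B'"
    and "X \<subseteq> B' - B"
  shows "card {x \<in> X. basis E indep (insert x (B - {a})) \<and> basis E indep (insert a (B' - {x}))}
           \<ge> card X - 2"
proof -
  note M = assms(1) and SP = assms(2) and Bb = assms(3)
  have BE: "B \<subseteq> E" "B' \<subseteq> E"
    using assms(3,4) matroid_indep_subset_ground[OF M] by (auto simp: basis_def)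
  have fB: "finite B" "finite B'" using BE matroid_finite_subset[OF M] by auto
  have cBa: "card (B - {a}) + 1 = card B"
    using fB(1) assms(6) card_gt_0_iff[of B] by (auto simp: card_Diff_singleton)
  have cB'a: "card (insert a B') = card B + 1"
    using fB(2) assms(6) bases_card_eq[OF M Bb assms(4)] by simp
  have swap: "insert a (B' - {x}) = insert a B' - {x}" if "x \<in> X" for x
    using that assms(6,7) by auto
  have "basis E indep (insert x (B - {a})) \<longleftrightarrow> indep (insert x (B - {a}))"
    "basis E indep (insert a (B' - {x})) \<longleftrightarrow> indep (insert a B' - {x})" if "x \<in> X" for x
    unfolding swap[OF that] using that assms(6,7) cBa cB'a fB
    by (auto intro!: basis_iff_indep_card_eq[OF M Bb])
  then have "{x \<in> X. basis E indep (insert x (B - {a})) \<and> basis E indep (insert a (B' - {x}))}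
      = {x \<in> X. indep (insert x (B - {a})) \<and> indep (insert a B' - {x})}"
    by blast
  moreover have "card X - 2 \<le> card {x \<in> X. indep (insert x (B - {a})) \<and> indep (insert a B' - {x})}"
  proof (rule card_filter_conj_ge)
    show "finite X" using assms(7) fB(2) finite_subset by blast
    show "card {x \<in> X. \<not> indep (insert x (B - {a}))} \<le> 1"
      using BE cBa assms(7) by (intro sparse_paving_card_dependent_insert_le_1[OF SP Bb]) auto
    show "card {x \<in> X. \<not> indep (insert a B' - {x})} \<le> 1"
      using BE assms(6,7) cB'a by (intro sparse_paving_card_dependent_remove_le_1[OF SP Bb]) auto
  qed
  ultimately show ?thesis by simp
qed

end
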